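(* Let $(X,\rho)$ be a separable metric space, $\mu$ a Radon measure on $X$, and $\{X_i\}_{i=1}^\infty$ a $\mu$-measurable decomposition of $X$. Suppose that for each $i$ there is $\delta_i\in\Upsilon(X_i,\mu)$ with $\|\delta_i\|_{\mathrm{op}}\le1$. Then the linear operator $\delta:\mathrm{Lip}_b(X)\to L^\infty(X,\mu)$, $\delta f=\sum_{i=1}^\infty\chi_{X_i}\,\delta_i(f|_{X_i})$, is a derivation in $\Upsilon(X,\mu)$ with $\|\delta\|_{\mathrm{op}}\le1$.
   Context: A collection $\{X_i\}$ of $\mu$-measurable sets is a $\mu$-measurable decomposition if $\mu$ is concentrated on $\bigcup_iX_i$ and $\mu(X_i\cap X_j)=0$ for $i\ne j$. For a metric space $Y$ with Borel measure $\mu$, $\mathrm{Lip}_b(Y)$ is the space of bounded Lipschitz functions with norm $\|f\|_{\mathrm{Lip}}=\max(\sup|f|,L(f))$; a derivation is a linear map $\delta:\mathrm{Lip}_b(Y)\to L^\infty(Y,\mu)$ with the Leibniz rule $\delta(fg)=f\delta g+g\delta f$ and such that whenever a net $(f_\alpha)$ with $\sup\|f_\alpha\|_{\mathrm{Lip}}<\infty$ converges pointwise to $f$, $\delta f_\alpha\to\delta f$ weak-* in $L^\infty(Y,\mu)$; $\Upsilon(Y,\mu)$ is the set of derivations, and $\Upsilon(X_i,\mu)$ refers to the subspace $X_i$ with the restricted metric and measure. $\|\delta\|_{\mathrm{op}}=\sup\{\|\delta f\|_{L^\infty}:\|f\|_{\mathrm{Lip}}\le1\}$. *)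

theory Defs
  imports "HOL-Analysis.Analysis"
begin

definition radon_measure :: "'a::metric_space measure \<Rightarrow> bool" where
  "radon_measure \<mu> \<longleftrightarrow>
     sets \<mu> = sets borel \<and>
     (\<forall>x. \<exists>U. open U \<and> x \<in> U \<and> emeasure \<mu> U < \<infinity>) \<and>
     (\<forall>A\<in>sets borel. emeasure \<mu> A = (SUP K\<in>{K. compact K \<and> K \<subseteq> A}. emeasure \<mu> K))"

text \<open>mu-measurable sets are the sets of the completion of mu.\<close>
definition measurable_decomposition :: "'a measure \<Rightarrow> (nat \<Rightarrow> 'a set) \<Rightarrow> bool" where
  "measurable_decomposition \<mu> X \<longleftrightarrow>
     (\<forall>i. X i \<in> sets (completion \<mu>)) \<and>
     space \<mu> - (\<Union>i. X i) \<in> null_sets (completion \<mu>) \<and>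
     (\<forall>i j. i \<noteq> j \<longrightarrow> X i \<inter> X j \<in> null_sets (completion \<mu>))"

definition lipb :: "'a::metric_space set \<Rightarrow> ('a \<Rightarrow> real) \<Rightarrow> bool" where
  "lipb S f \<longleftrightarrow> bounded (f ` S) \<and> (\<exists>L. L-lipschitz_on S f)"

definition lip_const :: "'a::metric_space set \<Rightarrow> ('a \<Rightarrow> real) \<Rightarrow> real" where
  "lip_const S f = Inf {L. L-lipschitz_on S f}"

definition lip_norm :: "'a::metric_space set \<Rightarrow> ('a \<Rightarrow> real) \<Rightarrow> real" where
  "lip_norm S f = max (SUP x\<in>S. \<bar>f x\<bar>) (lip_const S f)"

definition Linf_norm :: "'a measure \<Rightarrow> 'a set \<Rightarrow> ('a \<Rightarrow> real) \<Rightarrow> ereal" where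
  "Linf_norm \<mu> S g = Inf {C. AE x in \<mu>. x \<in> S \<longrightarrow> ereal \<bar>g x\<bar> \<le> C}"

text \<open>Elements of
  Lip_b(S) are represented by functions on the whole type (only values on S matter),
  elements of L-infinity(S, mu) by functions measurable for the completion of mu,
  equality being a.e. on S.  Nets are represented by filters on the function space.\<close>
definition derivation :: "'a::metric_space set \<Rightarrow> 'a measure \<Rightarrow> (('a \<Rightarrow> real) \<Rightarrow> ('a \<Rightarrow> real)) \<Rightarrow> bool" where
  "derivation S \<mu> \<delta> \<longleftrightarrow>
     (\<forall>f. lipb S f \<longrightarrow>
        set_borel_measurable (completion \<mu>) S (\<delta> f) \<and>
        (\<exists>C. AE x in completion \<mu>. x \<in> S \<longrightarrow> \<bar>\<delta> f x\<bar> \<le> C)) \<and>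
     (\<forall>f g. lipb S f \<longrightarrow> lipb S g \<longrightarrow> (\<forall>x\<in>S. f x = g x) \<longrightarrow>
        (AE x in completion \<mu>. x \<in> S \<longrightarrow> \<delta> f x = \<delta> g x)) \<and>
     (\<forall>f g a b. lipb S f \<longrightarrow> lipb S g \<longrightarrow>
        (AE x in completion \<mu>. x \<in> S \<longrightarrow>
           \<delta> (\<lambda>y. a * f y + b * g y) x = a * \<delta> f x + b * \<delta> g x)) \<and>
     (\<forall>f g. lipb S f \<longrightarrow> lipb S g \<longrightarrow>
        (AE x in completion \<mu>. x \<in> S \<longrightarrow>
           \<delta> (\<lambda>y. f y * g y) x = f x * \<delta> g x + g x * \<delta> f x)) \<and>
     (\<forall>(F :: ('a \<Rightarrow> real) filter) f C. lipb S f \<longrightarrow>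
        (\<forall>\<^sub>F g in F. lipb S g \<and> lip_norm S g \<le> C) \<longrightarrow>
        (\<forall>x\<in>S. ((\<lambda>g. g x) \<longlongrightarrow> f x) F) \<longrightarrow>
        (\<forall>h. set_integrable (completion \<mu>) S h \<longrightarrow>
           ((\<lambda>g. LINT x:S|completion \<mu>. \<delta> g x * h x) \<longlongrightarrow>
              (LINT x:S|completion \<mu>. \<delta> f x * h x)) F))"

definition op_norm :: "'a::metric_space set \<Rightarrow> 'a measure \<Rightarrow> (('a \<Rightarrow> real) \<Rightarrow> ('a \<Rightarrow> real)) \<Rightarrow> ereal" where
  "op_norm S \<mu> \<delta> = Sup {Linf_norm (completion \<mu>) S (\<delta> f) | f. lipb S f \<and> lip_norm S f \<le> 1}"

end

theory Submission
  imports Defs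
begin

text \<open>
  Almost every point lies in exactly one piece \<open>X i\<close>, and there the glued operator
  \<open>\<delta> f\<close> coincides with \<open>\<delta>\<^sub>i f\<close>. Linearity, the Leibniz rule and the bound
  \<open>|\<delta> f| \<le> \<parallel>f\<parallel>\<^sub>L\<^sub>i\<^sub>p\<close> (an essential bound is attained, and \<open>\<parallel>\<cdot>\<parallel>\<^sub>L\<^sub>i\<^sub>p\<close> only
  decreases under restriction) are therefore inherited piece by piece.
  For weak-* continuity, \<open>\<integral> \<delta> g \<cdot> h\<close> splits as \<open>\<Sum>\<^sub>i \<integral>\<^bsub>X i\<^esub> \<delta>\<^sub>i g \<cdot> h\<close>; each term
  converges by continuity of \<open>\<delta>\<^sub>i\<close>, and along a net bounded in \<open>Lip\<^sub>b\<close> all terms are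
  dominated by \<open>K \<integral>\<^bsub>X i\<^esub> |h|\<close>, a summable sequence, so Tannery's theorem passes the
  limit through the series.
\<close>

lemma lipbI: "(\<And>x. x \<in> S \<Longrightarrow> \<bar>f x\<bar> \<le> c) \<Longrightarrow> c-lipschitz_on S f \<Longrightarrow> lipb S f"
  unfolding lipb_def bounded_iff by auto

lemma lipb_subset: "lipb S f \<Longrightarrow> T \<subseteq> S \<Longrightarrow> lipb T f"
  unfolding lipb_def by (meson bounded_subset image_mono lipschitz_on_subset)

lemma lipb_imp_bounded_lipschitz:
  assumes "lipb S f"
  obtains c where "0 < c" "\<And>x. x \<in> S \<Longrightarrow> \<bar>f x\<bar> \<le> c" "c-lipschitz_on S f"
proof -
  from assms obtain B L where B: "\<And>x. x \<in> S \<Longrightarrow> \<bar>f x\<bar> \<le> B" and L: "L-lipschitz_on S f"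
    unfolding lipb_def bounded_iff by auto
  show ?thesis
  proof (rule that[of "max 1 (max B L)"])
    show "\<bar>f x\<bar> \<le> max 1 (max B L)" if "x \<in> S" for x
      using B[OF that] by linarith
  qed (auto intro: lipschitz_on_le[OF L])
qed

lemma lipschitz_on_lip_const:
  assumes "lipb S f"
  shows "(lip_const S f)-lipschitz_on S f"
proof -
  let ?Ls = "{L. L-lipschitz_on S f}"
  have ne: "?Ls \<noteq> {}"
    using assms unfolding lipb_def by auto
  have nonneg: "0 \<le> lip_const S f"
    unfolding lip_const_def using ne by (auto intro: cInf_greatest simp: lipschitz_on_def)
  have "dist (f x) (f y) \<le> lip_const S f * dist x y" if "x \<in> S" "y \<in> S" for x y
  proof (cases "x = y")
    case False
    have "dist (f x) (f y) / dist x y \<le> L" if "L \<in> ?Ls" for L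
      using that \<open>x \<in> S\<close> \<open>y \<in> S\<close> False by (auto simp: lipschitz_on_def divide_simps)
    then have "dist (f x) (f y) / dist x y \<le> lip_const S f"
      unfolding lip_const_def using ne by (intro cInf_greatest) auto
    then show ?thesis
      using False by (simp add: divide_simps)
  qed simp
  then show ?thesis
    using nonneg by (auto simp: lipschitz_on_def)
qed

lemma abs_le_lip_norm: "lipb S f \<Longrightarrow> x \<in> S \<Longrightarrow> \<bar>f x\<bar> \<le> lip_norm S f"
  unfolding lip_norm_def lipb_def bounded_iff
  by (rule max.coboundedI1, rule cSUP_upper) (auto intro: bdd_aboveI2)

lemma lipschitz_on_lip_norm: "lipb S f \<Longrightarrow> (lip_norm S f)-lipschitz_on S f"
  unfolding lip_norm_def by (auto intro: lipschitz_on_le[OF lipschitz_on_lip_const])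

lemma lip_norm_le:
  assumes "S \<noteq> {}" "\<And>x. x \<in> S \<Longrightarrow> \<bar>f x\<bar> \<le> c" "c-lipschitz_on S f"
  shows "lip_norm S f \<le> c"
proof -
  have "(SUP x\<in>S. \<bar>f x\<bar>) \<le> c"
    using assms by (auto intro: cSUP_least)
  moreover have "lip_const S f \<le> c"
    unfolding lip_const_def using assms(3)
    by (auto intro: cInf_lower bdd_belowI[of _ 0] simp: lipschitz_on_def)
  ultimately show ?thesis
    unfolding lip_norm_def by simp
qed

lemma
  assumes "lipb S f" "lip_norm S f \<le> c"
  shows lip_norm_leD_abs: "x \<in> S \<Longrightarrow> \<bar>f x\<bar> \<le> c"
    and lip_norm_leD_lipschitz: "c-lipschitz_on S f"
  using abs_le_lip_norm[OF assms(1)] lipschitz_on_le[OF lipschitz_on_lip_norm[OF assms(1)]] assms(2)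
  by (auto intro: order_trans)

lemma AE_abs_le_Linf_norm: "AE x in M. x \<in> S \<longrightarrow> ereal \<bar>g x\<bar> \<le> Linf_norm M S g"
proof -
  let ?Cs = "{C. AE x in M. x \<in> S \<longrightarrow> ereal \<bar>g x\<bar> \<le> C}"
  show ?thesis
  proof (cases "?Cs = {}")
    case True
    then have "Linf_norm M S g = top"
      unfolding Linf_norm_def by (simp only: Inf_empty)
    then show ?thesis
      by simp
  next
    case False
    from Inf_countable_INF[OF False] obtain C :: "nat \<Rightarrow> ereal"
      where C: "range C \<subseteq> ?Cs" "Inf ?Cs = (INF n. C n)"
      by (elim exE conjE)
    have "AE x in M. x \<in> S \<longrightarrow> ereal \<bar>g x\<bar> \<le> C n" for n
      using C(1) by (simp add: image_subset_iff)
    then have "AE x in M. \<forall>n. x \<in> S \<longrightarrow> ereal \<bar>g x\<bar> \<le> C n"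
      by (subst AE_all_countable) simp
    then show ?thesis
      unfolding Linf_norm_def C(2)
      by eventually_elim (simp add: INF_greatest)
  qed
qed

lemma
  assumes "derivation S \<mu> \<delta>" "lipb S f"
  shows derivationD_measurable: "set_borel_measurable (completion \<mu>) S (\<delta> f)"
    and derivationD_linear: "lipb S g \<Longrightarrow>
      AE x in completion \<mu>. x \<in> S \<longrightarrow> \<delta> (\<lambda>y. a * f y + b * g y) x = a * \<delta> f x + b * \<delta> g x"
    and derivationD_Leibniz: "lipb S g \<Longrightarrow>
      AE x in completion \<mu>. x \<in> S \<longrightarrow> \<delta> (\<lambda>y. f y * g y) x = f x * \<delta> g x + g x * \<delta> f x"
    and derivationD_tendsto: "\<forall>\<^sub>F g in F. lipb S g \<and> lip_norm S g \<le> C \<Longrightarrow>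
      (\<And>x. x \<in> S \<Longrightarrow> ((\<lambda>g. g x) \<longlongrightarrow> f x) F) \<Longrightarrow> set_integrable (completion \<mu>) S h \<Longrightarrow>
      ((\<lambda>g. LINT x:S|completion \<mu>. \<delta> g x * h x) \<longlongrightarrow> (LINT x:S|completion \<mu>. \<delta> f x * h x)) F"
proof -
  note D = assms(1)[unfolded derivation_def]
  show "set_borel_measurable (completion \<mu>) S (\<delta> f)"
    using D assms(2) by simp
  show "lipb S g \<Longrightarrow>
      AE x in completion \<mu>. x \<in> S \<longrightarrow> \<delta> (\<lambda>y. a * f y + b * g y) x = a * \<delta> f x + b * \<delta> g x"
    using D assms(2) by simp
  show "lipb S g \<Longrightarrow>
      AE x in completion \<mu>. x \<in> S \<longrightarrow> \<delta> (\<lambda>y. f y * g y) x = f x * \<delta> g x + g x * \<delta> f x"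
    using D assms(2) by simp
  show "\<forall>\<^sub>F g in F. lipb S g \<and> lip_norm S g \<le> C \<Longrightarrow>
      (\<And>x. x \<in> S \<Longrightarrow> ((\<lambda>g. g x) \<longlongrightarrow> f x) F) \<Longrightarrow> set_integrable (completion \<mu>) S h \<Longrightarrow>
      ((\<lambda>g. LINT x:S|completion \<mu>. \<delta> g x * h x) \<longlongrightarrow> (LINT x:S|completion \<mu>. \<delta> f x * h x)) F"
    using conjunct2[OF conjunct2[OF conjunct2[OF conjunct2[OF D]]]] assms(2) by blast
qed

lemma derivation_AE_abs_le_1:
  assumes "op_norm S \<mu> \<delta> \<le> 1" "lipb S f" "lip_norm S f \<le> 1"
  shows "AE x in completion \<mu>. x \<in> S \<longrightarrow> \<bar>\<delta> f x\<bar> \<le> 1"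
proof -
  have "Linf_norm (completion \<mu>) S (\<delta> f) \<le> op_norm S \<mu> \<delta>"
    unfolding op_norm_def by (rule Sup_upper) (use assms(2,3) in blast)
  then have L: "Linf_norm (completion \<mu>) S (\<delta> f) \<le> 1"
    using assms(1) by (rule order_trans)
  show ?thesis
    using AE_abs_le_Linf_norm[where M="completion \<mu>" and S=S and g="\<delta> f"]
  proof (eventually_elim, intro impI)
    case (elim x)
    assume "x \<in> S"
    have "ereal \<bar>\<delta> f x\<bar> \<le> 1"
      using order_trans[OF elim[rule_format, OF \<open>x \<in> S\<close>] L] .
    then show "\<bar>\<delta> f x\<bar> \<le> 1"
      by (simp add: one_ereal_def)
  qed
qed

lemma derivation_AE_abs_le:
  assumes \<delta>: "derivation S \<mu> \<delta>" "op_norm S \<mu> \<delta> \<le> 1"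
    and c: "0 < c" "\<And>x. x \<in> S \<Longrightarrow> \<bar>f x\<bar> \<le> c" "c-lipschitz_on S f"
  shows "AE x in completion \<mu>. x \<in> S \<longrightarrow> \<bar>\<delta> f x\<bar> \<le> c"
proof (cases "S = {}")
  case False
  have f: "lipb S f"
    using c(2,3) by (rule lipbI)
  \<comment> \<open>Linearity is the only scaling property of a derivation, hence the shape of \<open>f'\<close>.\<close>
  define f' where "f' = (\<lambda>y. (1 / c) * f y + 0 * f y)"
  have f'_bound: "\<bar>f' x\<bar> \<le> 1" if "x \<in> S" for x
    using c(1) c(2)[OF that] by (simp add: f'_def abs_mult)
  have f'_lipschitz: "1-lipschitz_on S f'"
    using lipschitz_on_cmult_real_nonneg[OF c(3), of "1 / c"] c(1) by (simp add: f'_def)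
  have "AE x in completion \<mu>. x \<in> S \<longrightarrow> \<bar>\<delta> f' x\<bar> \<le> 1"
    using \<delta>(2) lipbI[OF f'_bound f'_lipschitz] lip_norm_le[OF False f'_bound f'_lipschitz]
    by (rule derivation_AE_abs_le_1)
  moreover have "AE x in completion \<mu>. x \<in> S \<longrightarrow> \<delta> f' x = \<delta> f x / c"
    using derivationD_linear[OF \<delta>(1) f f, of "1 / c" 0] unfolding f'_def by simp
  ultimately show ?thesis
  proof (eventually_elim, intro impI)
    case (elim x)
    assume "x \<in> S"
    with elim c(1) have "\<bar>\<delta> f x\<bar> / c \<le> 1"
      by simp
    with c(1) show "\<bar>\<delta> f x\<bar> \<le> c"
      by (simp add: pos_divide_le_eq)
  qed
qed simp

lemma measurable_decompositionD_sets:
  "measurable_decomposition \<mu> X \<Longrightarrow> X i \<in> sets (completion \<mu>)"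
  unfolding measurable_decomposition_def by blast

lemma AE_in_decomposition:
  assumes "measurable_decomposition \<mu> X"
  shows "AE x in completion \<mu>. \<exists>!i. x \<in> X i"
proof -
  have covered: "AE x in completion \<mu>. x \<notin> space \<mu> - (\<Union>i. X i)"
    using assms unfolding measurable_decomposition_def by (intro AE_not_in) simp
  have "AE x in completion \<mu>. x \<notin> X i \<inter> X j" if "i \<noteq> j" for i j
    using assms that unfolding measurable_decomposition_def by (intro AE_not_in) simp
  then have disjoint: "AE x in completion \<mu>. \<forall>i j. i \<noteq> j \<longrightarrow> x \<notin> X i \<inter> X j"
    by (simp add: AE_all_countable)
  from covered disjoint AE_space show ?thesis
    by eventually_elim auto
qed

definition glued_derivation ::
    "(nat \<Rightarrow> 'a set) \<Rightarrow> (nat \<Rightarrow> ('a \<Rightarrow> real) \<Rightarrow> 'a \<Rightarrow> real) \<Rightarrow> ('a \<Rightarrow> real) \<Rightarrow> 'a \<Rightarrow> real" where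
  "glued_derivation X \<delta> f x = (\<Sum>i. indicator (X i) x * \<delta> i f x)"

lemma sum_lessThan_indicator_unique:
  fixes a :: "nat \<Rightarrow> real"
  assumes "x \<in> X i" "\<exists>!i. x \<in> X i"
  shows "(\<Sum>j<n. indicator (X j) x * a j) = (if i < n then a i else 0)"
proof -
  have "(\<Sum>j<n. indicator (X j) x * a j) = (\<Sum>j<n. if j = i then a i else 0)"
    using assms by (intro sum.cong) (auto split: split_indicator)
  then show ?thesis
    by simp
qed

lemma sums_indicator_unique:
  fixes a :: "nat \<Rightarrow> real"
  assumes "x \<in> X i" "\<exists>!i. x \<in> X i"
  shows "(\<lambda>j. indicator (X j) x * a j) sums a i"
  unfolding sums_def sum_lessThan_indicator_unique[OF assms]
  by (rule tendsto_eventually) (auto simp: eventually_sequentially intro: exI[of _ "Suc i"])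

lemma glued_derivation_eq:
  "x \<in> X i \<Longrightarrow> \<exists>!i. x \<in> X i \<Longrightarrow> glued_derivation X \<delta> f x = \<delta> i f x"
  unfolding glued_derivation_def by (rule sums_unique[symmetric], rule sums_indicator_unique)

lemma AE_glued_derivation:
  assumes "measurable_decomposition \<mu> X" "\<And>i. AE x in completion \<mu>. x \<in> X i \<longrightarrow> P i x"
  shows "AE x in completion \<mu>. \<exists>i. P i x \<and> (\<forall>f. glued_derivation X \<delta> f x = \<delta> i f x)"
proof -
  have "AE x in completion \<mu>. \<forall>i. x \<in> X i \<longrightarrow> P i x"
    using assms(2) by (subst AE_all_countable) simp
  with AE_in_decomposition[OF assms(1)] show ?thesis
    by eventually_elim (metis glued_derivation_eq)
qed

lemma borel_measurable_glued_derivation: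
  "(\<And>i. set_borel_measurable M (X i) (\<delta> i f)) \<Longrightarrow> glued_derivation X \<delta> f \<in> borel_measurable M"
  unfolding glued_derivation_def set_borel_measurable_def by (rule borel_measurable_suminf) simp

lemma glued_derivation_AE_abs_le:
  assumes X: "measurable_decomposition \<mu> X"
    and \<delta>: "\<And>i. derivation (X i) \<mu> (\<delta> i)" "\<And>i. op_norm (X i) \<mu> (\<delta> i) \<le> 1"
    and f: "0 < c" "\<And>x. \<bar>f x\<bar> \<le> c" "c-lipschitz_on UNIV f"
  shows "AE x in completion \<mu>. \<bar>glued_derivation X \<delta> f x\<bar> \<le> c"
proof -
  have "AE x in completion \<mu>. x \<in> X i \<longrightarrow> \<bar>\<delta> i f x\<bar> \<le> c" for i
    using \<delta> f(1) f(2) lipschitz_on_subset[OF f(3), of "X i"] by (rule derivation_AE_abs_le) simp_all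
  from AE_glued_derivation[where P="\<lambda>i x. \<bar>\<delta> i f x\<bar> \<le> c" and \<delta>=\<delta>, OF X this]
  show ?thesis
  proof eventually_elim
    case (elim x)
    then obtain i where "\<bar>\<delta> i f x\<bar> \<le> c" "glued_derivation X \<delta> f x = \<delta> i f x"
      by blast
    then show ?case
      by simp
  qed
qed

lemma sums_set_integral_decomposition:
  fixes f :: "'a \<Rightarrow> real"
  assumes X: "measurable_decomposition \<mu> X" and f: "integrable (completion \<mu>) f"
  shows "(\<lambda>i. LINT x:X i|completion \<mu>. f x) sums (\<integral>x. f x \<partial>completion \<mu>)"
proof -
  let ?M = "completion \<mu>"
  define s where "s n x = (\<Sum>i<n. indicator (X i) x * f x)" for n x
  have "(\<lambda>n. integral\<^sup>L ?M (s n)) \<longlonglongrightarrow> integral\<^sup>L ?M f"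
  proof (rule integral_dominated_convergence)
    show "f \<in> borel_measurable ?M" "integrable ?M (\<lambda>x. \<bar>f x\<bar>)"
      using f by auto
    show "s n \<in> borel_measurable ?M" for n
      unfolding s_def using measurable_decompositionD_sets[OF X] borel_measurable_integrable[OF f]
      by (intro borel_measurable_sum borel_measurable_times borel_measurable_indicator)
    show "AE x in ?M. (\<lambda>n. s n x) \<longlonglongrightarrow> f x"
      using AE_in_decomposition[OF X]
    proof eventually_elim
      case (elim x)
      then obtain i where "x \<in> X i"
        by blast
      from sums_indicator_unique[OF this elim, of "\<lambda>_. f x"] show ?case
        by (simp add: s_def sums_def)
    qed
    show "AE x in ?M. norm (s n x) \<le> \<bar>f x\<bar>" for n
      using AE_in_decomposition[OF X]
    proof eventually_elim
      case (elim x)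
      then obtain i where "x \<in> X i"
        by blast
      from sum_lessThan_indicator_unique[OF this elim, where n=n and a="\<lambda>_. f x"] show ?case
        by (simp add: s_def)
    qed
  qed
  moreover have "integral\<^sup>L ?M (s n) = (\<Sum>i<n. LINT x:X i|?M. f x)" for n
  proof -
    have int: "integrable ?M (\<lambda>x. indicator (X i) x * f x)" for i
      using integrable_mult_indicator[OF measurable_decompositionD_sets[OF X] f] by simp
    have "integral\<^sup>L ?M (s n) = (\<Sum>i<n. \<integral>x. indicator (X i) x * f x \<partial>?M)"
      unfolding s_def by (rule Bochner_Integration.integral_sum) (rule int)
    then show ?thesis
      by (simp add: set_lebesgue_integral_def)
  qed
  ultimately show ?thesis
    unfolding sums_def by simp
qed

lemma abs_set_integral_mult_le:
  fixes g h :: "'a \<Rightarrow> real"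
  assumes A: "A \<in> sets M" and gh: "integrable M (\<lambda>x. g x * h x)" and h: "integrable M h"
    and g: "AE x in M. \<bar>g x\<bar> \<le> c"
  shows "\<bar>LINT x:A|M. g x * h x\<bar> \<le> c * (LINT x:A|M. \<bar>h x\<bar>)"
proof -
  have "\<bar>LINT x:A|M. g x * h x\<bar> \<le> (\<integral>x. \<bar>indicator A x * (g x * h x)\<bar> \<partial>M)"
    unfolding set_lebesgue_integral_def by simp
  also have "\<dots> \<le> (\<integral>x. c * (indicator A x * \<bar>h x\<bar>) \<partial>M)"
  proof (rule integral_mono_AE)
    show "integrable M (\<lambda>x. \<bar>indicator A x * (g x * h x)\<bar>)"
      using integrable_mult_indicator[OF A gh] by simp
    show "integrable M (\<lambda>x. c * (indicator A x * \<bar>h x\<bar>))"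
      using integrable_mult_indicator[OF A integrable_abs[OF h]] by simp
    show "AE x in M. \<bar>indicator A x * (g x * h x)\<bar> \<le> c * (indicator A x * \<bar>h x\<bar>)"
      using g by eventually_elim (auto simp: abs_mult intro: mult_right_mono split: split_indicator)
  qed
  also have "\<dots> = c * (LINT x:A|M. \<bar>h x\<bar>)"
    unfolding set_lebesgue_integral_def by simp
  finally show ?thesis .
qed

lemma set_integral_glued_derivation:
  fixes h :: "'a \<Rightarrow> real"
  assumes X: "measurable_decomposition \<mu> X"
    and \<delta>: "\<And>i. set_borel_measurable (completion \<mu>) (X i) (\<delta> i f)"
    and h: "h \<in> borel_measurable (completion \<mu>)"
  shows "(LINT x:X k|completion \<mu>. glued_derivation X \<delta> f x * h x) = (LINT x:X k|completion \<mu>. \<delta> k f x * h x)"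
  unfolding set_lebesgue_integral_def
proof (rule integral_cong_AE)
  have "(\<lambda>x. indicator (X k) x * \<delta> k f x) \<in> borel_measurable (completion \<mu>)"
    using \<delta> unfolding set_borel_measurable_def by simp
  then show "(\<lambda>x. indicator (X k) x *\<^sub>R (\<delta> k f x * h x)) \<in> borel_measurable (completion \<mu>)"
    using h by (simp add: mult.assoc[symmetric])
  have "(\<lambda>x. indicator (X k) x) \<in> borel_measurable (completion \<mu>)"
    using measurable_decompositionD_sets[OF X] by (rule borel_measurable_indicator)
  then show "(\<lambda>x. indicator (X k) x *\<^sub>R (glued_derivation X \<delta> f x * h x)) \<in> borel_measurable (completion \<mu>)"
    using borel_measurable_glued_derivation[of "completion \<mu>" X \<delta> f, OF \<delta>] h
    by (auto intro!: borel_measurable_times)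
  show "AE x in completion \<mu>. indicator (X k) x *\<^sub>R (glued_derivation X \<delta> f x * h x)
                               = indicator (X k) x *\<^sub>R (\<delta> k f x * h x)"
    using AE_in_decomposition[OF X] by eventually_elim (simp add: glued_derivation_eq split: split_indicator)
qed

lemma
  fixes h :: "'a::metric_space \<Rightarrow> real"
  assumes X: "measurable_decomposition \<mu> X"
    and \<delta>: "\<And>i. derivation (X i) \<mu> (\<delta> i)" "\<And>i. op_norm (X i) \<mu> (\<delta> i) \<le> 1"
    and g: "0 < c" "\<And>x. \<bar>g x\<bar> \<le> c" "c-lipschitz_on UNIV g"
    and h: "integrable (completion \<mu>) h"
  shows sums_set_integral_glued_derivation:
      "(\<lambda>k. LINT x:X k|completion \<mu>. \<delta> k g x * h x) sums (\<integral>x. glued_derivation X \<delta> g x * h x \<partial>completion \<mu>)"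
    and abs_set_integral_derivation_le:
      "\<bar>LINT x:X k|completion \<mu>. \<delta> k g x * h x\<bar> \<le> c * (LINT x:X k|completion \<mu>. \<bar>h x\<bar>)"
proof -
  have meas: "set_borel_measurable (completion \<mu>) (X i) (\<delta> i g)" for i
    using derivationD_measurable[OF \<delta>(1) lipb_subset[OF lipbI[OF g(2,3)]]] by simp
  have bound: "AE x in completion \<mu>. \<bar>glued_derivation X \<delta> g x\<bar> \<le> c"
    by (rule glued_derivation_AE_abs_le[OF X \<delta> g])
  have int: "integrable (completion \<mu>) (\<lambda>x. glued_derivation X \<delta> g x * h x)"
  proof (rule Bochner_Integration.integrable_bound)
    show "integrable (completion \<mu>) (\<lambda>x. c * \<bar>h x\<bar>)"
      using h by simp
    show "(\<lambda>x. glued_derivation X \<delta> g x * h x) \<in> borel_measurable (completion \<mu>)"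
      using borel_measurable_glued_derivation[of "completion \<mu>" X \<delta> g, OF meas] h by simp
    show "AE x in completion \<mu>. norm (glued_derivation X \<delta> g x * h x) \<le> norm (c * \<bar>h x\<bar>)"
      using bound by eventually_elim (use g(1) in \<open>auto simp: abs_mult intro: mult_right_mono\<close>)
  qed
  have eq: "(LINT x:X k|completion \<mu>. glued_derivation X \<delta> g x * h x) = (LINT x:X k|completion \<mu>. \<delta> k g x * h x)" for k
    using X meas borel_measurable_integrable[OF h] by (rule set_integral_glued_derivation)
  show "(\<lambda>k. LINT x:X k|completion \<mu>. \<delta> k g x * h x) sums (\<integral>x. glued_derivation X \<delta> g x * h x \<partial>completion \<mu>)"
    using sums_set_integral_decomposition[OF X int] by (simp only: eq)
  from abs_set_integral_mult_le[OF measurable_decompositionD_sets[OF X] int h bound]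
  show "\<bar>LINT x:X k|completion \<mu>. \<delta> k g x * h x\<bar> \<le> c * (LINT x:X k|completion \<mu>. \<bar>h x\<bar>)"
    by (simp only: eq)
qed

lemma derivation_set_integral_tendsto:
  fixes h :: "'a::metric_space \<Rightarrow> real"
  assumes \<delta>: "derivation S \<mu> \<delta>" and f: "lipb UNIV f"
    and F: "\<forall>\<^sub>F g in F. (\<forall>x. \<bar>g x\<bar> \<le> K) \<and> K-lipschitz_on UNIV g"
    and lim: "\<And>x. ((\<lambda>g. g x) \<longlongrightarrow> f x) F"
    and S: "S \<in> sets (completion \<mu>)" and h: "integrable (completion \<mu>) h"
  shows "((\<lambda>g. LINT x:S|completion \<mu>. \<delta> g x * h x) \<longlongrightarrow> (LINT x:S|completion \<mu>. \<delta> f x * h x)) F"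
proof (cases "S = {}")
  case False
  have "\<forall>\<^sub>F g in F. lipb S g \<and> lip_norm S g \<le> K"
    using F
  proof eventually_elim
    case (elim g)
    then have "\<And>x. x \<in> S \<Longrightarrow> \<bar>g x\<bar> \<le> K" "K-lipschitz_on S g"
      by (auto intro: lipschitz_on_subset)
    then show ?case
      using lipbI lip_norm_le[OF False] by blast
  qed
  moreover have "set_integrable (completion \<mu>) S h"
    unfolding set_integrable_def by (rule integrable_mult_indicator[OF S h])
  ultimately show ?thesis
    using derivationD_tendsto[OF \<delta> lipb_subset[OF f]] lim by simp
qed (simp add: set_lebesgue_integral_def)

lemma tendsto_suminf_uniformly_dominated:
  fixes a :: "nat \<Rightarrow> 'b \<Rightarrow> real"
  assumes "\<And>k. ((\<lambda>n. a k n) \<longlongrightarrow> b k) F"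
    and "\<forall>\<^sub>F n in F. \<forall>k. \<bar>a k n\<bar> \<le> M k"
    and "summable M"
  shows "((\<lambda>n. \<Sum>k. a k n) \<longlongrightarrow> (\<Sum>k. b k)) F"
proof (cases "F = bot")
  case False
  have "\<forall>\<^sub>F (k, n) in at_top \<times>\<^sub>F F. norm (a k n) \<le> M k"
    unfolding eventually_prod_filter
    by (rule exI[of _ "\<lambda>_. True"], rule exI[of _ "\<lambda>n. \<forall>k. \<bar>a k n\<bar> \<le> M k"])
       (use assms(2) in auto)
  from tannerys_theorem[OF assms(1) this assms(3) False] show ?thesis
    by blast
qed simp

lemma glued_derivation_tendsto:
  fixes h :: "'a::metric_space \<Rightarrow> real"
  assumes X: "measurable_decomposition \<mu> X"
    and \<delta>: "\<And>i. derivation (X i) \<mu> (\<delta> i)" "\<And>i. op_norm (X i) \<mu> (\<delta> i) \<le> 1"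
    and f: "lipb UNIV f"
    and F: "\<forall>\<^sub>F g in F. lipb UNIV g \<and> lip_norm UNIV g \<le> C"
    and lim: "\<And>x. ((\<lambda>g. g x) \<longlongrightarrow> f x) F"
    and h: "integrable (completion \<mu>) h"
  shows "((\<lambda>g. \<integral>x. glued_derivation X \<delta> g x * h x \<partial>completion \<mu>)
            \<longlongrightarrow> (\<integral>x. glued_derivation X \<delta> f x * h x \<partial>completion \<mu>)) F"
proof -
  let ?M = "completion \<mu>"
  let ?a = "\<lambda>k g. LINT x:X k|?M. \<delta> k g x * h x"
  let ?H = "\<lambda>k. LINT x:X k|?M. \<bar>h x\<bar>"
  obtain c where c: "0 < c" "\<And>x. \<bar>f x\<bar> \<le> c" "c-lipschitz_on UNIV f"
    using lipb_imp_bounded_lipschitz[OF f] by (metis UNIV_I)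
  define K where "K = max c (max 1 C)"
  have K: "0 < K" "c \<le> K" "C \<le> K"
    unfolding K_def by auto
  have Kf: "\<bar>f x\<bar> \<le> K" for x
    using c(2)[of x] K(2) by linarith
  have Kf': "K-lipschitz_on UNIV f"
    using c(3) K(2) by (rule lipschitz_on_le)
  have KF: "\<forall>\<^sub>F g in F. (\<forall>x. \<bar>g x\<bar> \<le> K) \<and> K-lipschitz_on UNIV g"
    using F
  proof eventually_elim
    case (elim g)
    then have "lipb UNIV g" "lip_norm UNIV g \<le> K"
      using K(3) by auto
    then show ?case
      using lip_norm_leD_abs lip_norm_leD_lipschitz by blast
  qed
  have sum_tendsto: "((\<lambda>g. \<Sum>k. ?a k g) \<longlongrightarrow> (\<Sum>k. ?a k f)) F"
  proof (rule tendsto_suminf_uniformly_dominated)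
    show "((\<lambda>g. ?a k g) \<longlongrightarrow> ?a k f) F" for k
      using \<delta>(1) f KF lim measurable_decompositionD_sets[OF X] h
      by (rule derivation_set_integral_tendsto)
    show "\<forall>\<^sub>F g in F. \<forall>k. \<bar>?a k g\<bar> \<le> K * ?H k"
      using KF by eventually_elim (use abs_set_integral_derivation_le[OF X \<delta> K(1)] h in blast)
    show "summable (\<lambda>k. K * ?H k)"
      using sums_set_integral_decomposition[OF X integrable_abs[OF h]]
      by (intro summable_mult) (rule sums_summable)
  qed
  have sum_eq: "\<forall>\<^sub>F g in F. (\<Sum>k. ?a k g) = (\<integral>x. glued_derivation X \<delta> g x * h x \<partial>?M)"
    using KF
  proof eventually_elim
    case (elim g)
    then show ?case
      using sums_set_integral_glued_derivation[OF X \<delta> K(1) _ _ h, of g] by (simp add: sums_iff)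
  qed
  have sum_eq_f: "(\<Sum>k. ?a k f) = (\<integral>x. glued_derivation X \<delta> f x * h x \<partial>?M)"
    using sums_set_integral_glued_derivation[OF X \<delta> K(1) Kf Kf' h] by (simp add: sums_iff)
  show ?thesis
    using Lim_transform_eventually[OF sum_tendsto sum_eq] unfolding sum_eq_f .
qed

lemma derivation_glued_derivation:
  assumes X: "measurable_decomposition \<mu> X"
    and \<delta>: "\<And>i. derivation (X i) \<mu> (\<delta> i)" "\<And>i. op_norm (X i) \<mu> (\<delta> i) \<le> 1"
  shows "derivation UNIV \<mu> (glued_derivation X \<delta>)"
  unfolding derivation_def
proof (intro conjI allI impI)
  fix f g :: "'a \<Rightarrow> real" and a b :: real
  assume f: "lipb UNIV f" and g: "lipb UNIV g"
  have lipb_X: "lipb (X i) f" "lipb (X i) g" for i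
    using f g by (auto intro: lipb_subset)
  show "AE x in completion \<mu>. x \<in> UNIV \<longrightarrow>
      glued_derivation X \<delta> (\<lambda>y. a * f y + b * g y) x = a * glued_derivation X \<delta> f x + b * glued_derivation X \<delta> g x"
    using AE_glued_derivation[OF X derivationD_linear[OF \<delta>(1) lipb_X], where \<delta>=\<delta>]
    by eventually_elim auto
  show "AE x in completion \<mu>. x \<in> UNIV \<longrightarrow>
      glued_derivation X \<delta> (\<lambda>y. f y * g y) x = f x * glued_derivation X \<delta> g x + g x * glued_derivation X \<delta> f x"
    using AE_glued_derivation[OF X derivationD_Leibniz[OF \<delta>(1) lipb_X], where \<delta>=\<delta>]
    by eventually_elim auto
next
  fix f :: "'a \<Rightarrow> real"
  assume f: "lipb UNIV f"
  show "set_borel_measurable (completion \<mu>) UNIV (glued_derivation X \<delta> f)"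
    using borel_measurable_glued_derivation[of "completion \<mu>" X \<delta> f,
        OF derivationD_measurable[OF \<delta>(1) lipb_subset[OF f]]]
    by (simp add: set_borel_measurable_def)
  obtain c where "0 < c" "\<And>x. \<bar>f x\<bar> \<le> c" "c-lipschitz_on UNIV f"
    using lipb_imp_bounded_lipschitz[OF f] by (metis UNIV_I)
  with X \<delta> have "AE x in completion \<mu>. \<bar>glued_derivation X \<delta> f x\<bar> \<le> c"
    by (rule glued_derivation_AE_abs_le)
  then show "\<exists>C. AE x in completion \<mu>. x \<in> UNIV \<longrightarrow> \<bar>glued_derivation X \<delta> f x\<bar> \<le> C"
    by auto
next
  fix f g :: "'a \<Rightarrow> real"
  assume "\<forall>x\<in>UNIV. f x = g x"
  then have "f = g"
    by auto
  then show "AE x in completion \<mu>. x \<in> UNIV \<longrightarrow> glued_derivation X \<delta> f x = glued_derivation X \<delta> g x"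
    by simp
next
  fix F :: "('a \<Rightarrow> real) filter" and f :: "'a \<Rightarrow> real" and C :: real and h :: "'a \<Rightarrow> real"
  assume "lipb UNIV f" "\<forall>\<^sub>F g in F. lipb UNIV g \<and> lip_norm UNIV g \<le> C"
    "\<forall>x\<in>UNIV. ((\<lambda>g. g x) \<longlongrightarrow> f x) F" "set_integrable (completion \<mu>) UNIV h"
  then show "((\<lambda>g. LINT x:UNIV|completion \<mu>. glued_derivation X \<delta> g x * h x)
      \<longlongrightarrow> (LINT x:UNIV|completion \<mu>. glued_derivation X \<delta> f x * h x)) F"
    using glued_derivation_tendsto[OF X \<delta>] by (simp add: set_integrable_def set_lebesgue_integral_def)
qed

lemma op_norm_glued_derivation_le:
  assumes X: "measurable_decomposition \<mu> X"
    and \<delta>: "\<And>i. derivation (X i) \<mu> (\<delta> i)" "\<And>i. op_norm (X i) \<mu> (\<delta> i) \<le> 1"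
  shows "op_norm UNIV \<mu> (glued_derivation X \<delta>) \<le> 1"
  unfolding op_norm_def
proof (rule Sup_least, clarify)
  fix f :: "'a \<Rightarrow> real"
  assume f: "lipb UNIV f" "lip_norm UNIV f \<le> 1"
  have "AE x in completion \<mu>. \<bar>glued_derivation X \<delta> f x\<bar> \<le> 1"
    using X \<delta> zero_less_one lip_norm_leD_abs[OF f] lip_norm_leD_lipschitz[OF f]
    by (rule glued_derivation_AE_abs_le) simp
  then have "AE x in completion \<mu>. x \<in> UNIV \<longrightarrow> ereal \<bar>glued_derivation X \<delta> f x\<bar> \<le> 1"
    by eventually_elim (simp add: one_ereal_def)
  then show "Linf_norm (completion \<mu>) UNIV (glued_derivation X \<delta> f) \<le> 1"
    unfolding Linf_norm_def by (rule Inf_lower[OF CollectI])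
qed

theorem lemma2p16:
  fixes \<mu> :: "'a::metric_space measure"
    and X :: "nat \<Rightarrow> 'a set"
    and \<delta>\<^sub>i :: "nat \<Rightarrow> ('a \<Rightarrow> real) \<Rightarrow> ('a \<Rightarrow> real)"
  assumes "separable_space (euclidean :: 'a topology)"
    and "radon_measure \<mu>"
    and "measurable_decomposition \<mu> X"
    and "\<forall>i. derivation (X i) \<mu> (\<delta>\<^sub>i i)"
    and "\<forall>i. op_norm (X i) \<mu> (\<delta>\<^sub>i i) \<le> 1"
  shows "derivation UNIV \<mu> (\<lambda>f x. \<Sum>i. indicator (X i) x * \<delta>\<^sub>i i f x)
       \<and> op_norm UNIV \<mu> (\<lambda>f x. \<Sum>i. indicator (X i) x * \<delta>\<^sub>i i f x) \<le> 1"
proof -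
  have glued: "(\<lambda>f x. \<Sum>i. indicator (X i) x * \<delta>\<^sub>i i f x) = glued_derivation X \<delta>\<^sub>i"
    by (simp add: fun_eq_iff glued_derivation_def)
  show ?thesis
    unfolding glued using assms(3-5)
    by (blast intro: derivation_glued_derivation op_norm_glued_derivation_le)
qed

end
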